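(* Let $B$ be a commutative ring with identity which is a pm-ring, and let $A$ be a dense subring of $B$. Then for any two distinct maximal ideals $M, M'$ of $B$, the set $(M\cap A)\cap(M'\cap A)$ does not contain any prime ideal of $A$.
   Context: All rings are commutative with identity; subrings contain the identity. A pm-ring is a ring in which every prime ideal is contained in a unique maximal ideal. A subring $A$ of $B$ is dense in $B$ if for every ideal $I$ of $B$ and every $b\in B\setminus \operatorname{rad}(I)$ there exists $a\in B\setminus\operatorname{rad}(I)$ with $ab\in A$. *)

theory Defs
  imports "HOL-Algebra.Algebra"
begin

definition ideal_rad :: "('a, 'b) ring_scheme \<Rightarrow> 'a set \<Rightarrow> 'a set" where
  "ideal_rad R I = {x \<in> carrier R. \<exists>n::nat. x [^]\<^bsub>R\<^esub> n \<in> I}"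

definition pm_ring :: "('a, 'b) ring_scheme \<Rightarrow> bool" where
  "pm_ring R \<longleftrightarrow> (\<forall>P. primeideal P R \<longrightarrow> (\<exists>!M. maximalideal M R \<and> P \<subseteq> M))"

definition dense_subring :: "'a set \<Rightarrow> ('a, 'b) ring_scheme \<Rightarrow> bool" where
  "dense_subring A B \<longleftrightarrow> subring A B \<and>
     (\<forall>I. ideal I B \<longrightarrow>
        (\<forall>b \<in> carrier B - ideal_rad B I.
           \<exists>a \<in> carrier B - ideal_rad B I. a \<otimes>\<^bsub>B\<^esub> b \<in> A))"

end

theory Submission
  imports Defs
begin

text \<open>
  In a pm-ring two distinct maximal ideals M, M' contain no common prime ideal. A prime ideal
  maximal among those avoiding the multiplicative set (B - M)(B - M') would lie in M \<inter> M',
  so this set contains 0: there are u \<notin> M and v \<notin> M' with uv = 0. Density moves u and v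
  into A without leaving the complements, i.e. au, bv \<in> A with a \<notin> M and b \<notin> M'.
  A prime ideal P of A contains (au)(bv) = 0, hence au or bv, so P cannot lie in M \<inter> M'.
\<close>

lemma (in cring) exists_ideal_maximal_disjoint:
  assumes "\<zero> \<notin> S"
  shows "\<exists>Q. ideal Q R \<and> Q \<inter> S = {} \<and>
           (\<forall>J. ideal J R \<longrightarrow> J \<inter> S = {} \<longrightarrow> Q \<subseteq> J \<longrightarrow> J = Q)"
proof -
  define F where "F = {I. ideal I R \<and> I \<inter> S = {}}"
  have "{\<zero>} \<in> F"
    unfolding F_def using zeroideal assms by simp
  then have "F \<noteq> {}" by blast
  then have "\<exists>Q\<in>F. \<forall>J\<in>F. Q \<subseteq> J \<longrightarrow> J = Q"
  proof (rule subset_Zorn_nonempty)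
    fix C assume "C \<noteq> {}" and chain: "subset.chain F C"
    then have "C \<subseteq> F" and "\<forall>I\<in>C. \<forall>J\<in>C. I \<subseteq> J \<or> J \<subseteq> I"
      by (simp_all add: subset_chain_def)
    moreover have "F \<subseteq> {I. ideal I R}"
      unfolding F_def by fast
    ultimately have "subset.chain {I. ideal I R} C"
      unfolding subset_chain_def by fast
    from chain_Union_is_ideal[OF this] \<open>C \<noteq> {}\<close> have "ideal (\<Union>C) R"
      by simp
    moreover have "\<Union>C \<inter> S = {}"
      using \<open>C \<subseteq> F\<close> unfolding F_def by fast
    ultimately show "\<Union>C \<in> F"
      unfolding F_def by simp
  qed
  then obtain Q where "Q \<in> F" "\<forall>J\<in>F. Q \<subseteq> J \<longrightarrow> J = Q"
    by blast
  then have "ideal Q R" "Q \<inter> S = {}"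
    and "\<And>J. ideal J R \<Longrightarrow> J \<inter> S = {} \<Longrightarrow> Q \<subseteq> J \<Longrightarrow> J = Q"
    unfolding F_def by auto
  then show ?thesis
    by blast
qed

lemma (in cring) primeideal_if_maximal_disjoint:
  assumes Q: "ideal Q R" "Q \<inter> S = {}"
    and Q_max: "\<And>J. ideal J R \<Longrightarrow> J \<inter> S = {} \<Longrightarrow> Q \<subseteq> J \<Longrightarrow> J = Q"
    and S: "\<one> \<in> S" "\<And>s t. s \<in> S \<Longrightarrow> t \<in> S \<Longrightarrow> s \<otimes> t \<in> S"
  shows "primeideal Q R"
proof -
  interpret Q: ideal Q R by fact
  have meets_S: "\<exists>q r. q \<in> Q \<and> r \<in> carrier R \<and> q \<oplus> r \<otimes> a \<in> S"
    if a: "a \<in> carrier R" "a \<notin> Q" for a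
  proof -
    let ?J = "Q <+>\<^bsub>R\<^esub> PIdl a"
    have J: "ideal ?J R"
      using add_ideals[OF Q(1) cgenideal_ideal[OF a(1)]] .
    have "q \<in> ?J" if "q \<in> Q" for q
    proof -
      have "q = q \<oplus> \<zero> \<otimes> a"
        using that a by simp
      with that show ?thesis
        unfolding set_add_def' cgenideal_def by blast
    qed
    moreover have "a \<in> ?J"
    proof -
      have "a = \<zero> \<oplus> \<one> \<otimes> a"
        using a by simp
      then show ?thesis
        unfolding set_add_def' cgenideal_def using Q.zero_closed by blast
    qed
    ultimately have "?J \<inter> S \<noteq> {}"
      using Q_max[OF J] a(2) by blast
    then show ?thesis
      unfolding set_add_def' cgenideal_def by blast
  qed
  show ?thesis
  proof (rule primeidealI[OF Q(1) is_cring])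
    show "carrier R \<noteq> Q"
      using Q(2) S(1) by blast
    fix a b assume ab: "a \<in> carrier R" "b \<in> carrier R" "a \<otimes> b \<in> Q"
    show "a \<in> Q \<or> b \<in> Q"
    proof (rule ccontr)
      assume "\<not> (a \<in> Q \<or> b \<in> Q)"
      then obtain q1 r1 q2 r2
        where q1: "q1 \<in> Q" "r1 \<in> carrier R" "q1 \<oplus> r1 \<otimes> a \<in> S"
          and q2: "q2 \<in> Q" "r2 \<in> carrier R" "q2 \<oplus> r2 \<otimes> b \<in> S"
        using meets_S ab by meson
      have carr: "q1 \<in> carrier R" "q2 \<in> carrier R"
        using q1 q2 Q.Icarr by auto
      have "(q1 \<oplus> r1 \<otimes> a) \<otimes> (q2 \<oplus> r2 \<otimes> b)
            = q1 \<otimes> (q2 \<oplus> r2 \<otimes> b) \<oplus> ((r1 \<otimes> a) \<otimes> q2 \<oplus> (r1 \<otimes> r2) \<otimes> (a \<otimes> b))"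
        using carr q1 q2 ab by algebra
      also have "\<dots> \<in> Q"
        using carr q1 q2 ab by (simp add: Q.I_r_closed Q.I_l_closed Q.a_closed)
      finally show False
        using S(2)[OF q1(3) q2(3)] Q(2) by blast
    qed
  qed
qed

lemma (in cring) exists_primeideal_disjoint:
  assumes "\<one> \<in> S" "\<zero> \<notin> S" "\<And>s t. s \<in> S \<Longrightarrow> t \<in> S \<Longrightarrow> s \<otimes> t \<in> S"
  shows "\<exists>Q. primeideal Q R \<and> Q \<inter> S = {}"
proof -
  obtain Q where "ideal Q R" "Q \<inter> S = {}"
    and "\<And>J. ideal J R \<Longrightarrow> J \<inter> S = {} \<Longrightarrow> Q \<subseteq> J \<Longrightarrow> J = Q"
    using exists_ideal_maximal_disjoint[OF assms(2)] by blast
  with primeideal_if_maximal_disjoint assms(1,3) show ?thesis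
    by blast
qed

lemma (in cring) exists_primeideal_subset_Int:
  assumes M: "primeideal M R" and M': "primeideal M' R"
    and no_zero_divisors: "\<And>u v. u \<in> carrier R - M \<Longrightarrow> v \<in> carrier R - M' \<Longrightarrow> u \<otimes> v \<noteq> \<zero>"
  shows "\<exists>Q. primeideal Q R \<and> Q \<subseteq> M \<inter> M'"
proof -
  interpret M: primeideal M R by fact
  interpret M': primeideal M' R by fact
  have one: "\<one> \<in> carrier R - M" "\<one> \<in> carrier R - M'"
    using M.I_notcarr M.one_imp_carrier M'.I_notcarr M'.one_imp_carrier by auto
  define T where "T = {u \<otimes> v | u v. u \<in> carrier R - M \<and> v \<in> carrier R - M'}"
  have T_superset: "(carrier R - M) \<union> (carrier R - M') \<subseteq> T"
  proof
    fix x assume x: "x \<in> (carrier R - M) \<union> (carrier R - M')"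
    then have "x = x \<otimes> \<one>" "x = \<one> \<otimes> x"
      by auto
    with x one show "x \<in> T"
      unfolding T_def by blast
  qed
  have "\<one> \<in> T"
    using subsetD[OF T_superset UnI1[OF one(1)]] .
  moreover have "\<zero> \<notin> T"
  proof
    assume "\<zero> \<in> T"
    then obtain u v where "u \<in> carrier R - M" "v \<in> carrier R - M'" "u \<otimes> v = \<zero>"
      unfolding T_def by auto
    with no_zero_divisors show False
      by blast
  qed
  moreover have "s \<otimes> t \<in> T" if "s \<in> T" "t \<in> T" for s t
  proof -
    obtain u v where uv: "u \<in> carrier R - M" "v \<in> carrier R - M'" "s = u \<otimes> v"
      using \<open>s \<in> T\<close> unfolding T_def by auto
    obtain u' v' where uv': "u' \<in> carrier R - M" "v' \<in> carrier R - M'" "t = u' \<otimes> v'"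
      using \<open>t \<in> T\<close> unfolding T_def by auto
    have "s \<otimes> t = (u \<otimes> u') \<otimes> (v \<otimes> v')"
      using uv uv' by (simp add: m_ac)
    moreover have "u \<otimes> u' \<in> carrier R - M" "v \<otimes> v' \<in> carrier R - M'"
      using uv uv' M.I_prime M'.I_prime by auto
    ultimately show ?thesis
      unfolding T_def by blast
  qed
  ultimately obtain Q where Q: "primeideal Q R" "Q \<inter> T = {}"
    using exists_primeideal_disjoint by blast
  have "Q \<subseteq> carrier R"
    using ideal.Icarr[OF primeideal.axioms(1)[OF Q(1)]] by blast
  with Q(2) T_superset have "Q \<subseteq> M \<inter> M'"
    by blast
  with Q(1) show ?thesis
    by blast
qed

lemma (in cring) pm_ring_maximalideals_zero_product:
  assumes "pm_ring R" "maximalideal M R" "maximalideal M' R" "M \<noteq> M'"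
  shows "\<exists>u \<in> carrier R - M. \<exists>v \<in> carrier R - M'. u \<otimes> v = \<zero>"
proof (rule ccontr)
  assume "\<not> ?thesis"
  then have "\<exists>Q. primeideal Q R \<and> Q \<subseteq> M \<inter> M'"
    using exists_primeideal_subset_Int maximalideal_prime assms(2,3) by blast
  then obtain Q where Q: "primeideal Q R" "Q \<subseteq> M \<inter> M'"
    by blast
  have "\<exists>!N. maximalideal N R \<and> Q \<subseteq> N"
    using assms(1) Q(1) unfolding pm_ring_def by blast
  with assms(2-4) Q(2) show False
    by blast
qed

lemma ideal_rad_primeideal:
  assumes "primeideal P R"
  shows "ideal_rad R P = P"
proof -
  interpret primeideal P R by fact
  have "x \<in> P" if "x \<in> carrier R" "x [^]\<^bsub>R\<^esub> (n::nat) \<in> P" for x n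
    using that
  proof (induction n)
    case 0
    then show ?case
      using I_notcarr one_imp_carrier by auto
  next
    case (Suc n)
    then show ?case
      using I_prime[of "x [^]\<^bsub>R\<^esub> n" x] by auto
  qed
  moreover have "x [^]\<^bsub>R\<^esub> (1::nat) \<in> P" if "x \<in> P" for x
    using that Icarr by simp
  ultimately show ?thesis
    unfolding ideal_rad_def using Icarr by blast
qed

lemma dense_subring_mult_mem:
  assumes "dense_subring A R" "primeideal P R" "b \<in> carrier R - P"
  shows "\<exists>a \<in> carrier R - P. a \<otimes>\<^bsub>R\<^esub> b \<in> A"
proof -
  have "ideal P R"
    using assms(2) by (rule primeideal.axioms(1))
  with assms(1) have "\<forall>b \<in> carrier R - ideal_rad R P. \<exists>a \<in> carrier R - ideal_rad R P. a \<otimes>\<^bsub>R\<^esub> b \<in> A"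
    unfolding dense_subring_def by blast
  with assms(3) show ?thesis
    unfolding ideal_rad_primeideal[OF assms(2)] by blast
qed

theorem theorem3p7:
  fixes B :: "('a, 'b) ring_scheme" and A :: "'a set"
  assumes "cring B"
    and "pm_ring B"
    and "dense_subring A B"
    and "maximalideal M B" and "maximalideal M' B" and "M \<noteq> M'"
  shows "\<not> (\<exists>P. primeideal P (B\<lparr>carrier := A\<rparr>) \<and> P \<subseteq> (M \<inter> A) \<inter> (M' \<inter> A))"
proof
  assume "\<exists>P. primeideal P (B\<lparr>carrier := A\<rparr>) \<and> P \<subseteq> (M \<inter> A) \<inter> (M' \<inter> A)"
  then obtain P where P: "primeideal P (B\<lparr>carrier := A\<rparr>)" "P \<subseteq> M \<inter> M'"
    by blast
  interpret B: cring B by fact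
  interpret P: primeideal P "B\<lparr>carrier := A\<rparr>" by fact
  have M: "primeideal M B" and M': "primeideal M' B"
    using assms(4,5) B.maximalideal_prime by blast+
  obtain u v where uv: "u \<in> carrier B - M" "v \<in> carrier B - M'" "u \<otimes>\<^bsub>B\<^esub> v = \<zero>\<^bsub>B\<^esub>"
    using B.pm_ring_maximalideals_zero_product assms(2,4-6) by blast
  obtain a where a: "a \<in> carrier B - M" "a \<otimes>\<^bsub>B\<^esub> u \<in> A"
    using dense_subring_mult_mem[OF assms(3) M uv(1)] by blast
  obtain b where b: "b \<in> carrier B - M'" "b \<otimes>\<^bsub>B\<^esub> v \<in> A"
    using dense_subring_mult_mem[OF assms(3) M' uv(2)] by blast
  have "(a \<otimes>\<^bsub>B\<^esub> u) \<otimes>\<^bsub>B\<^esub> (b \<otimes>\<^bsub>B\<^esub> v) = (a \<otimes>\<^bsub>B\<^esub> b) \<otimes>\<^bsub>B\<^esub> (u \<otimes>\<^bsub>B\<^esub> v)"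
    using a b uv by (simp add: B.m_ac)
  also have "\<dots> = \<zero>\<^bsub>B\<^esub>"
    using a b uv by simp
  also have "\<dots> \<in> P"
    using additive_subgroup.zero_closed[OF ideal.axioms(1)[OF P.is_ideal]] by simp
  finally have "a \<otimes>\<^bsub>B\<^esub> u \<in> P \<or> b \<otimes>\<^bsub>B\<^esub> v \<in> P"
    using P.I_prime a(2) b(2) by simp
  with P(2) have "a \<otimes>\<^bsub>B\<^esub> u \<in> M \<or> b \<otimes>\<^bsub>B\<^esub> v \<in> M'"
    by blast
  then show False
    using primeideal.I_prime[OF M] primeideal.I_prime[OF M'] a(1) b(1) uv(1,2) by blast
qed

end
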